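(* Let $X$ be a convex metric space over a Boolean ring $B$, $0\in X$, and let $\{x_{1},\dots,x_{n}\}$ be a base of $(X,0)$. Then for every integer $k\ge1$ the ideal $I_k(X)$ is principal, $\alpha_{k}(X)=|x_{k}|$ for $k\le n$, and $\alpha_{k}(X)=0$ for $k>n$.
   Context: $B$ is a Boolean ring ($a\vee b=a+b+ab$, $a\le b\iff ab=a$; $a_1\oplus\cdots\oplus a_n$ denotes a sum of pairwise disjoint elements). A Boolean metric space over $B$: set $X$ with $d:X\times X\to B$, $d(x,y)=0\iff x=y$, symmetric, $d(x,z)\le d(x,y)\vee d(y,z)$. For $x_1,\dots,x_n\in X$, $a_i\in B$ with $a_1\oplus\cdots\oplus a_n=1$, $x$ is a convex combination of the $x_i$ with coefficients $a_i$ if $a_id(x,x_i)=0$ for all $i$; $X$ is convex if all such combinations exist. In $(X,0)$: $|x|=d(0,x)$; $x\perp y$ iff $d(x,y)=|x|\vee|y|$; a finite $R\subseteq X$ is orthogonal if $0\notin R$ and distinct elements are orthogonal; a referential is an orthogonal $R$ such that every element of $X$ is a convex combination of elements of $R\cup\{0\}$; a base is a referential $\{x_1,\dots,x_n\}$ with $|x_1|\ge\cdots\ge|x_n|$. For integer $k>0$, $I_k(X)$ is the ideal of $B$ generated by $\{\prod_{0\le i<j\le k}d(u_i,u_j): u_0,\dots,u_k\in X\}$, and when principal, $\alpha_k(X)$ is its generator. *)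

theory Defs
  imports Main
begin

text \<open>A Boolean ring is a ring with unit in which every element is idempotent;
  such a ring is automatically commutative, so we work in a comm_ring_1
  with the idempotency assumption.\<close>

definition boolean_ring :: "'b::comm_ring_1 itself \<Rightarrow> bool" where
  "boolean_ring _ \<longleftrightarrow> (\<forall>a::'b. a * a = a)"

definition bjoin :: "'b::comm_ring_1 \<Rightarrow> 'b \<Rightarrow> 'b" where
  "bjoin a b = a + b + a * b"

definition ble :: "'b::comm_ring_1 \<Rightarrow> 'b \<Rightarrow> bool" where
  "ble a b \<longleftrightarrow> a * b = a"

definition disjoint_partition :: "nat \<Rightarrow> (nat \<Rightarrow> 'b::comm_ring_1) \<Rightarrow> bool" where
  "disjoint_partition n a \<longleftrightarrow>
     (\<forall>i<n. \<forall>j<n. i \<noteq> j \<longrightarrow> a i * a j = 0) \<and> (\<Sum>i<n. a i) = 1"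

definition boolean_metric :: "'a set \<Rightarrow> ('a \<Rightarrow> 'a \<Rightarrow> 'b::comm_ring_1) \<Rightarrow> bool" where
  "boolean_metric X d \<longleftrightarrow>
     (\<forall>x\<in>X. \<forall>y\<in>X. d x y = 0 \<longleftrightarrow> x = y) \<and>
     (\<forall>x\<in>X. \<forall>y\<in>X. d x y = d y x) \<and>
     (\<forall>x\<in>X. \<forall>y\<in>X. \<forall>z\<in>X. ble (d x z) (bjoin (d x y) (d y z)))"

definition convex_comb ::
  "('a \<Rightarrow> 'a \<Rightarrow> 'b::comm_ring_1) \<Rightarrow> 'a \<Rightarrow> nat \<Rightarrow> (nat \<Rightarrow> 'a) \<Rightarrow> (nat \<Rightarrow> 'b) \<Rightarrow> bool" where
  "convex_comb d x n xs a \<longleftrightarrow> (\<forall>i<n. a i * d x (xs i) = 0)"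

definition convex_bms :: "'a set \<Rightarrow> ('a \<Rightarrow> 'a \<Rightarrow> 'b::comm_ring_1) \<Rightarrow> bool" where
  "convex_bms X d \<longleftrightarrow>
     (\<forall>n xs a. (\<forall>i<n. xs i \<in> X) \<and> disjoint_partition n a \<longrightarrow>
        (\<exists>x\<in>X. convex_comb d x n xs a))"

definition bnorm :: "('a \<Rightarrow> 'a \<Rightarrow> 'b::comm_ring_1) \<Rightarrow> 'a \<Rightarrow> 'a \<Rightarrow> 'b" where
  "bnorm d z x = d z x"

definition borth :: "('a \<Rightarrow> 'a \<Rightarrow> 'b::comm_ring_1) \<Rightarrow> 'a \<Rightarrow> 'a \<Rightarrow> 'a \<Rightarrow> bool" where
  "borth d z x y \<longleftrightarrow> d x y = bjoin (bnorm d z x) (bnorm d z y)"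

definition orthogonal_set :: "'a set \<Rightarrow> ('a \<Rightarrow> 'a \<Rightarrow> 'b::comm_ring_1) \<Rightarrow> 'a \<Rightarrow> 'a set \<Rightarrow> bool" where
  "orthogonal_set X d z R \<longleftrightarrow>
     finite R \<and> R \<subseteq> X \<and> z \<notin> R \<and>
     (\<forall>x\<in>R. \<forall>y\<in>R. x \<noteq> y \<longrightarrow> borth d z x y)"

definition referential :: "'a set \<Rightarrow> ('a \<Rightarrow> 'a \<Rightarrow> 'b::comm_ring_1) \<Rightarrow> 'a \<Rightarrow> 'a set \<Rightarrow> bool" where
  "referential X d z R \<longleftrightarrow>
     orthogonal_set X d z R \<and>
     (\<forall>x\<in>X. \<exists>m ys a. (\<forall>i<m. ys i \<in> R \<union> {z}) \<and> disjoint_partition m a \<and>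
                        convex_comb d x m ys a)"

definition is_base :: "'a set \<Rightarrow> ('a \<Rightarrow> 'a \<Rightarrow> 'b::comm_ring_1) \<Rightarrow> 'a \<Rightarrow> nat \<Rightarrow> (nat \<Rightarrow> 'a) \<Rightarrow> bool" where
  "is_base X d z n x \<longleftrightarrow>
     inj_on x {1..n} \<and> referential X d z (x ` {1..n}) \<and>
     (\<forall>i j. 1 \<le> i \<and> i \<le> j \<and> j \<le> n \<longrightarrow> ble (bnorm d z (x j)) (bnorm d z (x i)))"

definition is_ideal :: "'b::comm_ring_1 set \<Rightarrow> bool" where
  "is_ideal I \<longleftrightarrow> 0 \<in> I \<and> (\<forall>a\<in>I. \<forall>b\<in>I. a + b \<in> I) \<and> (\<forall>a\<in>I. - a \<in> I) \<and>
                   (\<forall>r. \<forall>a\<in>I. r * a \<in> I)"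

definition gen_ideal :: "'b::comm_ring_1 set \<Rightarrow> 'b set" where
  "gen_ideal S = \<Inter>{I. is_ideal I \<and> S \<subseteq> I}"

definition I_k :: "'a set \<Rightarrow> ('a \<Rightarrow> 'a \<Rightarrow> 'b::comm_ring_1) \<Rightarrow> nat \<Rightarrow> 'b set" where
  "I_k X d k = gen_ideal
     {(\<Prod>(i,j)\<in>{(i,j). i < j \<and> j \<le> k}. d (u i) (u j)) | u. \<forall>i\<le>k. u i \<in> X}"

definition principal_ideal :: "'b::comm_ring_1 set \<Rightarrow> bool" where
  "principal_ideal I \<longleftrightarrow> (\<exists>a. I = gen_ideal {a})"

end

theory Submission
  imports Defs "HOL-Library.FuncSet"
begin

text \<open>
  Write \<open>\<pi>(u)\<close> for the product of all pairwise distances of a tuple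
  \<open>u\<^sub>0,\<dots>,u\<^sub>k\<close>, so that \<open>I\<^sub>k(X)\<close> is generated by the values \<open>\<pi>(u)\<close>.

  Lower bound: for \<open>k \<le> n\<close> the tuple \<open>(0, x\<^sub>1, \<dots>, x\<^sub>k)\<close> has \<open>\<pi> = |x\<^sub>k|\<close>, since by
  orthogonality every factor is a join of norms \<open>\<ge> |x\<^sub>k|\<close>.

  Upper bound (a pigeonhole argument): every \<open>u \<in> X\<close> is a convex combination of
  the finite set \<open>S = {0, x\<^sub>1, \<dots>, x\<^sub>n}\<close>, i.e. carries a partition of unity \<open>w\<^sub>u\<close> on
  \<open>S\<close> with \<open>w\<^sub>u(s) d(u,s) = 0\<close>.  Expanding \<open>1 = \<Prod>\<^sub>i \<Sum>\<^sub>s w\<^sub>u\<^sub>i(s)\<close> splits \<open>\<pi>(u)\<close> into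
  pieces indexed by maps \<open>f : {0..k} \<rightarrow> S\<close>.  If \<open>S\<close> is collapsed by a map \<open>\<phi>\<close> onto
  at most \<open>k\<close> points, modulo an element \<open>e\<close> (i.e. \<open>e d(s, \<phi> s) = 0\<close>), then two
  indices \<open>i < j\<close> have \<open>\<phi>(f i) = \<phi>(f j)\<close> and the piece of \<open>f\<close> kills \<open>d(u\<^sub>i,u\<^sub>j)\<close>.
  Hence \<open>e \<pi>(u) = 0\<close>.  Collapsing \<open>x\<^sub>k,\<dots>,x\<^sub>n\<close> to \<open>0\<close> with \<open>e = 1 - |x\<^sub>k|\<close> gives
  \<open>\<pi>(u) \<le> |x\<^sub>k|\<close>; for \<open>k > n\<close>, \<open>S\<close> itself has at most \<open>k\<close> points and \<open>\<pi>(u) = 0\<close>.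
\<close>

lemma boolean_ring_add_self:
  fixes a :: "'b::comm_ring_1"
  assumes idem: "\<forall>a::'b. a * a = a"
  shows "a + a = 0"
proof -
  have "(a + a) * (a + a) = a + a" using idem by blast
  hence "a*a + a*a + a*a + a*a = a + a" by (simp add: algebra_simps)
  hence "a + a + a + a = a + a" using idem by simp
  thus ?thesis by (simp add: algebra_simps)
qed

lemma bjoin_absorb:
  fixes p q a :: "'b::comm_ring_1"
  assumes idem: "\<forall>a::'b. a * a = a" and q: "q * a = a"
  shows "bjoin p q * a = a"
proof -
  have "bjoin p q * a = p * a + q * a + p * (q * a)" unfolding bjoin_def by (simp add: algebra_simps)
  also have "\<dots> = (p * a + p * a) + a" using q by (simp add: algebra_simps)
  also have "\<dots> = a" using boolean_ring_add_self[OF idem] by simp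
  finally show ?thesis .
qed

lemma below_prod:
  fixes a :: "'b::comm_ring_1"
  assumes "finite A" "\<forall>p\<in>A. F p * a = a"
  shows "a * prod F A = a"
  using assms
proof (induction A rule: finite_induct)
  case empty then show ?case by simp
next
  case (insert p A)
  have "a * prod F (insert p A) = (F p * a) * prod F A" using insert(1,2) by (simp add: algebra_simps)
  also have "\<dots> = a" using insert(3,4) by (simp add: mult.commute)
  finally show ?case .
qed

lemma prod_below_factor:
  fixes h :: "'i \<Rightarrow> 'b::comm_ring_1"
  assumes idem: "\<forall>a::'b. a * a = a" and "finite A" "i \<in> A"
  shows "e * prod h A * h i = e * prod h A"
proof -
  have split: "prod h A = h i * prod h (A - {i})" using assms(2,3) by (rule prod.remove)
  have "e * prod h A * h i = e * (h i * h i) * prod h (A - {i})"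
    unfolding split by (simp add: algebra_simps)
  also have "\<dots> = e * prod h A" unfolding split using idem by (simp add: mult.assoc)
  finally show ?thesis .
qed

lemma gen_ideal_ideal: "is_ideal (gen_ideal S)"
  unfolding gen_ideal_def is_ideal_def by auto

lemma gen_ideal_sub: "S \<subseteq> gen_ideal S"
  unfolding gen_ideal_def by auto

lemma gen_ideal_min: "is_ideal I \<Longrightarrow> S \<subseteq> I \<Longrightarrow> gen_ideal S \<subseteq> I"
  unfolding gen_ideal_def by auto

lemma gen_ideal_principal:
  assumes "a \<in> S" and "\<forall>s\<in>S. \<exists>r. s = r * a"
  shows "gen_ideal S = gen_ideal {a}"
proof
  have a: "a \<in> gen_ideal {a}" using gen_ideal_sub by blast
  have closed: "\<forall>r. \<forall>b\<in>gen_ideal {a}. r * b \<in> gen_ideal {a}"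
    using gen_ideal_ideal[of "{a}"] unfolding is_ideal_def by blast
  have "S \<subseteq> gen_ideal {a}" using assms(2) a closed by fastforce
  thus "gen_ideal S \<subseteq> gen_ideal {a}" by (rule gen_ideal_min[OF gen_ideal_ideal])
  show "gen_ideal {a} \<subseteq> gen_ideal S"
    using assms(1) gen_ideal_sub[of S] by (intro gen_ideal_min[OF gen_ideal_ideal]) auto
qed

lemma metric_dist_self: "boolean_metric X d \<Longrightarrow> v \<in> X \<Longrightarrow> d v v = 0"
  unfolding boolean_metric_def by blast

lemma metric_sym: "boolean_metric X d \<Longrightarrow> v \<in> X \<Longrightarrow> w \<in> X \<Longrightarrow> d v w = d w v"
  unfolding boolean_metric_def by blast

text \<open>If \<open>c\<close> annihilates \<open>d(x,y)\<close>, then modulo \<open>c\<close> the points \<open>x\<close> and \<open>y\<close> have the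
  same distance to every \<open>w\<close> (both inequalities come from the triangle law).\<close>
lemma dist_transfer:
  fixes d :: "'a \<Rightarrow> 'a \<Rightarrow> 'b::comm_ring_1"
  assumes M: "boolean_metric X d"
    and X: "x \<in> X" "y \<in> X" "w \<in> X" and c: "c * d x y = 0"
  shows "c * d x w = c * d y w"
proof -
  have h1: "d x w * (d x y + d y w + d x y * d y w) = d x w"
    using M X unfolding boolean_metric_def ble_def bjoin_def by blast
  have h2: "d y w * (d y x + d x w + d y x * d x w) = d y w"
    using M X unfolding boolean_metric_def ble_def bjoin_def by blast
  have s: "d y x = d x y" using M X unfolding boolean_metric_def by blast
  have "c * d x w = c * d x w * (d x y + d y w + d x y * d y w)" using h1 by (simp add: mult.assoc)
  also have "\<dots> = (c * d x y) * d x w * (1 + d y w) + c * d x w * d y w" by (simp add: algebra_simps)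
  finally have e1: "c * d x w = c * d x w * d y w" using c by simp
  have "c * d y w = c * d y w * (d y x + d x w + d y x * d x w)" using h2 by (simp add: mult.assoc)
  also have "\<dots> = (c * d x y) * d y w * (1 + d x w) + c * d y w * d x w" using s by (simp add: algebra_simps)
  finally have e2: "c * d y w = c * d y w * d x w" using c by simp
  show ?thesis using e1 e2 by (simp add: algebra_simps)
qed

lemma dist_annihilated_trans:
  fixes d :: "'a \<Rightarrow> 'a \<Rightarrow> 'b::comm_ring_1"
  assumes M: "boolean_metric X d" and X: "x \<in> X" "y \<in> X" "w \<in> X"
    and "c * d x y = 0" "c * d y w = 0"
  shows "c * d x w = 0"
  using dist_transfer[OF assms(1-5)] assms(6) by simp

text \<open>Every point of a space with referential \<open>R\<close> carries a partition of unity on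
  \<open>R \<union> {z}\<close> subordinate to its distances: merge the coefficients of equal points.\<close>
lemma referential_partition:
  fixes d :: "'a \<Rightarrow> 'a \<Rightarrow> 'b::comm_ring_1"
  assumes ref: "referential X d z R" and u: "u \<in> X"
  shows "\<exists>w. sum w (R \<union> {z}) = 1 \<and> (\<forall>s\<in>R \<union> {z}. w s * d u s = 0)"
proof -
  let ?S = "R \<union> {z}"
  have finS: "finite ?S" using ref unfolding referential_def orthogonal_set_def by simp
  obtain m ys a where ys: "\<forall>i<m. ys i \<in> ?S" and dp: "disjoint_partition m a"
      and cc: "convex_comb d u m ys a"
    using ref u unfolding referential_def by blast
  define w where "w s = (\<Sum>l\<in>{l. l \<in> {..<m} \<and> ys l = s}. a l)" for s
  have "sum w ?S = (\<Sum>l<m. a l)" unfolding w_def by (rule sum.group) (use ys finS in auto)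
  also have "\<dots> = 1" using dp unfolding disjoint_partition_def by blast
  finally have "sum w ?S = 1" .
  moreover have "w s * d u s = 0" for s
  proof -
    have "w s * d u s = (\<Sum>l\<in>{l. l \<in> {..<m} \<and> ys l = s}. a l * d u (ys l))"
      unfolding w_def sum_distrib_right by (rule sum.cong) auto
    also have "\<dots> = 0" using cc unfolding convex_comb_def by (intro sum.neutral) auto
    finally show ?thesis .
  qed
  ultimately show ?thesis by blast
qed

definition pair_product :: "('a \<Rightarrow> 'a \<Rightarrow> 'b::comm_ring_1) \<Rightarrow> (nat \<Rightarrow> 'a) \<Rightarrow> nat \<Rightarrow> 'b" where
  "pair_product d u k = (\<Prod>(i,j)\<in>{(i,j). i < j \<and> j \<le> k}. d (u i) (u j))"

lemma I_k_pair_product: "I_k X d k = gen_ideal {pair_product d u k | u. \<forall>i\<le>k. u i \<in> X}"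
  unfolding I_k_def pair_product_def ..

lemma finite_pairs: "finite {(i,j). i < j \<and> j \<le> (k::nat)}"
  by (rule finite_subset[of _ "{..k} \<times> {..k}"]) auto

lemma pair_product_annihilated:
  assumes "i < j" "j \<le> k" "c * d (u i) (u j) = 0"
  shows "c * pair_product d u k = 0"
proof -
  let ?P = "{(i,j). i < j \<and> j \<le> k}"
  have "pair_product d u k = d (u i) (u j) * (\<Prod>(i,j)\<in>?P - {(i,j)}. d (u i) (u j))"
    unfolding pair_product_def using assms(1,2) by (subst prod.remove[OF finite_pairs, of "(i,j)"]) auto
  thus ?thesis using assms(3) by (simp add: mult.assoc[symmetric])
qed

lemma pigeonhole_pair:
  assumes "finite S" "card (\<phi> ` S) \<le> k" "\<forall>i\<le>k. f i \<in> S"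
  shows "\<exists>i j. i < j \<and> j \<le> k \<and> \<phi> (f i) = \<phi> (f j)"
proof -
  have "\<not> inj_on (\<phi> \<circ> f) {..k}"
  proof
    assume "inj_on (\<phi> \<circ> f) {..k}"
    hence "card ((\<phi> \<circ> f) ` {..k}) = k + 1" using card_image[of "\<phi> \<circ> f" "{..k}"] by simp
    moreover have "card ((\<phi> \<circ> f) ` {..k}) \<le> card (\<phi> ` S)"
      using assms(1,3) by (intro card_mono) auto
    ultimately show False using assms(2) by simp
  qed
  then obtain a b where "a \<le> k" "b \<le> k" "a \<noteq> b" "\<phi> (f a) = \<phi> (f b)"
    unfolding inj_on_def by auto
  thus ?thesis by (metis linorder_neqE_nat)
qed

lemma pair_product_annihilation:
  fixes d :: "'a \<Rightarrow> 'a \<Rightarrow> 'b::comm_ring_1"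
  assumes idem: "\<forall>a::'b. a * a = a" and M: "boolean_metric X d"
    and S: "finite S" "S \<subseteq> X"
    and span: "\<forall>v\<in>X. \<exists>w. sum w S = 1 \<and> (\<forall>s\<in>S. w s * d v s = 0)"
    and \<phi>: "\<phi> ` S \<subseteq> X" "card (\<phi> ` S) \<le> k" "\<forall>s\<in>S. e * d s (\<phi> s) = 0"
    and u: "\<forall>i\<le>k. u i \<in> X"
  shows "e * pair_product d u k = 0"
proof -
  obtain W where W: "\<forall>v\<in>X. sum (W v) S = 1 \<and> (\<forall>s\<in>S. W v s * d v s = 0)"
    using bchoice[OF span] by blast
  have piece: "e * (\<Prod>i\<in>{..k}. W (u i) (f i)) * pair_product d u k = 0"
    if f: "f \<in> PiE {..k} (\<lambda>_. S)" for f
  proof -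
    define c where "c = e * (\<Prod>i\<in>{..k}. W (u i) (f i))"
    have fS: "\<And>i. i \<le> k \<Longrightarrow> f i \<in> S" using f by auto
    text \<open>The coefficient \<open>c\<close> identifies \<open>u i\<close> with \<open>f i\<close> and \<open>f i\<close> with \<open>\<phi> (f i)\<close>.\<close>
    have near: "c * d (u i) (\<phi> (f i)) = 0" if i: "i \<le> k" for i
    proof (rule dist_annihilated_trans[OF M])
      have "c * W (u i) (f i) = c"
        using prod_below_factor[OF idem, where A="{..k}" and i=i and h="\<lambda>i. W (u i) (f i)" and e=e] i
        unfolding c_def by simp
      hence "c * d (u i) (f i) = c * (W (u i) (f i) * d (u i) (f i))" by (metis mult.assoc)
      thus "c * d (u i) (f i) = 0" using W u fS i by simp
      have "c * d (f i) (\<phi> (f i)) = (\<Prod>i\<in>{..k}. W (u i) (f i)) * (e * d (f i) (\<phi> (f i)))"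
        unfolding c_def by (simp add: algebra_simps)
      thus "c * d (f i) (\<phi> (f i)) = 0" using \<phi>(3) fS i by simp
    qed (use u fS i S \<phi>(1) in auto)
    obtain i j where ij: "i < j" "j \<le> k" "\<phi> (f i) = \<phi> (f j)"
      using pigeonhole_pair[OF S(1) \<phi>(2)] fS by blast
    have mem: "u j \<in> X" "\<phi> (f j) \<in> X" "u i \<in> X" using u fS ij \<phi>(1) by auto
    have "c * d (\<phi> (f j)) (u j) = 0" using near[OF ij(2)] metric_sym[OF M mem(1,2)] by simp
    hence "c * d (u i) (u j) = 0"
      using dist_annihilated_trans[OF M mem(3,2,1)] near[of i] ij by simp
    thus ?thesis using pair_product_annihilated[OF ij(1,2)] unfolding c_def by blast
  qed
  have "(\<Prod>i\<in>{..k}. \<Sum>s\<in>S. W (u i) s) = 1" using W u by (intro prod.neutral) auto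
  hence "e * pair_product d u k = e * (\<Prod>i\<in>{..k}. \<Sum>s\<in>S. W (u i) s) * pair_product d u k"
    by simp
  also have "\<dots> = (\<Sum>f\<in>PiE {..k} (\<lambda>_. S). e * (\<Prod>i\<in>{..k}. W (u i) (f i)) * pair_product d u k)"
    by (simp add: prod_sum_PiE S(1) sum_distrib_left sum_distrib_right)
  also have "\<dots> = 0" using piece by (intro sum.neutral) blast
  finally show ?thesis .
qed

context
  fixes X :: "'a set" and d :: "'a \<Rightarrow> 'a \<Rightarrow> 'b::comm_ring_1"
    and z :: 'a and n :: nat and x :: "nat \<Rightarrow> 'a"
  assumes idem: "\<forall>a::'b. a * a = a"
    and M: "boolean_metric X d"
    and zX: "z \<in> X"
    and base: "is_base X d z n x"
begin

lemma base_referential: "referential X d z (x ` {1..n})"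
  using base unfolding is_base_def by blast

lemma base_mem: "i \<in> {1..n} \<Longrightarrow> x i \<in> X"
  using base_referential unfolding referential_def orthogonal_set_def by blast

lemma base_norm_mono: "1 \<le> i \<Longrightarrow> i \<le> j \<Longrightarrow> j \<le> n \<Longrightarrow> d z (x j) * d z (x i) = d z (x j)"
  using base unfolding is_base_def ble_def bnorm_def by blast

lemma base_orth:
  assumes "i \<in> {1..n}" "j \<in> {1..n}" "i \<noteq> j"
  shows "d (x i) (x j) = bjoin (d z (x i)) (d z (x j))"
proof -
  have "x i \<noteq> x j" using base assms unfolding is_base_def inj_on_def by blast
  thus ?thesis using base_referential assms
    unfolding referential_def orthogonal_set_def borth_def bnorm_def by blast
qed

lemma base_partition:
  "\<forall>v\<in>X. \<exists>w. sum w (x ` {1..n} \<union> {z}) = 1 \<and> (\<forall>s\<in>x ` {1..n} \<union> {z}. w s * d v s = 0)"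
  using referential_partition[OF base_referential] by blast

lemma base_support: "x ` {1..n} \<union> {z} \<subseteq> X"
  using base_mem zX by auto

lemma base_witness:
  assumes k: "1 \<le> k" "k \<le> n"
  shows "pair_product d (\<lambda>i. if i = 0 then z else x i) k = d z (x k)"
proof -
  let ?u = "\<lambda>i. if i = 0 then z else x i"
  let ?P = "{(i,j). i < j \<and> j \<le> k}"
  have factors: "d (?u i) (?u j) * d z (x k) = d z (x k)" if "(i,j) \<in> ?P - {(0,k)}" for i j
  proof -
    have ij: "i < j" "j \<le> k" using that by auto
    have jk: "d z (x j) * d z (x k) = d z (x k)"
      using base_norm_mono[of j k] ij k by (simp add: mult.commute)
    show ?thesis
    proof (cases "i = 0")
      case True then show ?thesis using jk ij by simp
    next
      case False
      then show ?thesis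
        using base_orth[of i j] bjoin_absorb[OF idem jk] ij k by simp
    qed
  qed
  have "pair_product d ?u k = d (?u 0) (?u k) * (\<Prod>(i,j)\<in>?P - {(0,k)}. d (?u i) (?u j))"
    unfolding pair_product_def using k by (subst prod.remove[OF finite_pairs, of "(0,k)"]) auto
  also have "\<dots> = d z (x k) * (\<Prod>(i,j)\<in>?P - {(0,k)}. d (?u i) (?u j))" using k by simp
  also have "\<dots> = d z (x k)"
    by (rule below_prod) (use finite_pairs[of k] in simp, use factors in fast)
  finally show ?thesis .
qed

text \<open>Upper bound for \<open>k \<le> n\<close>: collapse \<open>x\<^sub>k, \<dots>, x\<^sub>n\<close> onto \<open>z\<close> modulo \<open>1 - |x\<^sub>k|\<close>.\<close>
lemma base_upper:
  assumes k: "1 \<le> k" "k \<le> n" and u: "\<forall>i\<le>k. u i \<in> X"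
  shows "pair_product d u k = pair_product d u k * d z (x k)"
proof -
  let ?S = "x ` {1..n} \<union> {z}" and ?G = "x ` {1..<k}"
  define \<phi> where "\<phi> s = (if s \<in> ?G then s else z)" for s
  have range: "\<phi> ` ?S \<subseteq> ?G \<union> {z}" unfolding \<phi>_def by auto
  have "card (\<phi> ` ?S) \<le> card (?G \<union> {z})" using range by (intro card_mono) auto
  also have "\<dots> \<le> card ?G + 1" using card_Un_le[of ?G "{z}"] by simp
  also have "\<dots> \<le> k" using card_image_le[of "{1..<k}" x] k by simp
  finally have card: "card (\<phi> ` ?S) \<le> k" .
  have collapse: "(1 - d z (x k)) * d s (\<phi> s) = 0" if s: "s \<in> ?S" for s
  proof (cases "s \<in> ?G \<or> s = z")
    case True
    hence "\<phi> s = s" unfolding \<phi>_def by auto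
    then show ?thesis using metric_dist_self[OF M] s base_support by auto
  next
    case False
    then obtain m where m: "m \<in> {1..n}" "s = x m" "k \<le> m" using s by force
    have "\<phi> s = z" using False unfolding \<phi>_def by auto
    hence "d s (\<phi> s) = d z (x m)" using metric_sym[OF M] m base_mem zX by auto
    moreover have "d z (x m) * d z (x k) = d z (x m)" using base_norm_mono[of k m] k m by auto
    ultimately show ?thesis by (simp add: algebra_simps)
  qed
  have "(1 - d z (x k)) * pair_product d u k = 0"
  proof (rule pair_product_annihilation[OF idem M _ base_support base_partition _ card _ u])
    have "?G \<union> {z} \<subseteq> X" using base_mem zX k by auto
    thus "\<phi> ` ?S \<subseteq> X" using range by blast
  qed (use collapse in auto)
  thus ?thesis by (simp add: algebra_simps)
qed

text \<open>Upper bound for \<open>k > n\<close>: the support \<open>{z, x\<^sub>1, \<dots>, x\<^sub>n}\<close> has at most \<open>k\<close> points.\<close>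
lemma base_vanish:
  assumes k: "n < k" and u: "\<forall>i\<le>k. u i \<in> X"
  shows "pair_product d u k = 0"
proof -
  have "card (id ` (x ` {1..n} \<union> {z})) \<le> card (x ` {1..n}) + 1"
    using card_Un_le[of "x ` {1..n}" "{z}"] by simp
  also have "\<dots> \<le> k" using card_image_le[of "{1..n}" x] k by simp
  finally have card: "card (id ` (x ` {1..n} \<union> {z})) \<le> k" .
  have "1 * pair_product d u k = 0"
    by (rule pair_product_annihilation[OF idem M _ base_support base_partition _ card _ u])
       (use base_support metric_dist_self[OF M] in auto)
  thus ?thesis by simp
qed

end

theorem mainTheorem6:
  fixes X :: "'a set" and d :: "'a \<Rightarrow> 'a \<Rightarrow> 'b::comm_ring_1"
    and z :: 'a and n :: nat and x :: "nat \<Rightarrow> 'a"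
  assumes "boolean_ring TYPE('b)"
    and "boolean_metric X d"
    and "convex_bms X d"
    and "z \<in> X"
    and "is_base X d z n x"
  shows "\<forall>k\<ge>1. principal_ideal (I_k X d k) \<and>
           (k \<le> n \<longrightarrow> I_k X d k = gen_ideal {bnorm d z (x k)}) \<and>
           (n < k \<longrightarrow> I_k X d k = gen_ideal {0})"
proof (intro allI impI)
  fix k :: nat assume k: "1 \<le> k"
  have idem: "\<forall>a::'b. a * a = a" using assms(1) unfolding boolean_ring_def by blast
  note base = idem assms(2) assms(4) assms(5)
  let ?Gen = "{pair_product d u k | u. \<forall>i\<le>k. u i \<in> X}"
  have "I_k X d k = gen_ideal {bnorm d z (x k)}" if kn: "k \<le> n"
  proof -
    let ?u = "\<lambda>i. if i = 0 then z else x i"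
    have "\<forall>i\<le>k. ?u i \<in> X" using base_mem[OF base] assms(4) k kn by auto
    hence "d z (x k) \<in> ?Gen" using base_witness[OF base k kn] by (intro CollectI exI[of _ ?u]) simp
    moreover have "\<forall>s\<in>?Gen. \<exists>r. s = r * d z (x k)"
    proof
      fix s assume "s \<in> ?Gen"
      then obtain u where "\<forall>i\<le>k. u i \<in> X" "s = pair_product d u k" by blast
      thus "\<exists>r. s = r * d z (x k)" using base_upper[OF base k kn] by blast
    qed
    ultimately show ?thesis unfolding I_k_pair_product bnorm_def by (rule gen_ideal_principal)
  qed
  moreover have "I_k X d k = gen_ideal {0}" if nk: "n < k"
  proof -
    have "0 \<in> ?Gen" using base_vanish[OF base nk, of "\<lambda>_. z"] assms(4)
      by (intro CollectI exI[of _ "\<lambda>_. z"]) simp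
    moreover have "\<forall>s\<in>?Gen. \<exists>r. s = r * 0"
      using base_vanish[OF base nk] by (simp add: mem_Collect_eq) blast
    ultimately show ?thesis unfolding I_k_pair_product by (rule gen_ideal_principal)
  qed
  ultimately show "principal_ideal (I_k X d k) \<and>
           (k \<le> n \<longrightarrow> I_k X d k = gen_ideal {bnorm d z (x k)}) \<and>
           (n < k \<longrightarrow> I_k X d k = gen_ideal {0})"
    unfolding principal_ideal_def by (cases "k \<le> n") auto
qed

end
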